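(* $\mathrm{Bil}^{\rm FH}_D$ is an open subset of $\mathrm{Bil}_D$ with respect to the $C^{3+\alpha}$ topology.
   Context: Fix $D\ge1$ and $\alpha\in(0,1)$. $\mathrm{Bil}_D$ is the set of families $(f_i)_{1\le i\le D}$ of $C^{3+\alpha}$ maps $\mathbb S^1\to\mathbb T^2$, up to permutation of indices, such that for all $i$: each connected component of the lift of $f_i(\mathbb S^1)$ to $\mathbb R^2$ is the boundary of a convex set; $|f_i'|>0$ is constant, $|f_i''|\ne0$, $f_i$ turns counterclockwise and $f_i(\mathbb S^1)$ does not self-intersect; and $f_i(\mathbb S^1)\cap f_j(\mathbb S^1)=\emptyset$ for $i\ne j$. Such a family is identified with the Sinai billiard table $Q=\mathbb T^2\setminus\bigsqcup_iB_i$ where $\partial B_i$ is parametrized by $f_i$. $\mathrm{Bil}^{\rm FH}_D$ is the subset of tables with finite horizon, i.e. no billiard flow trajectory makes only grazing (tangential) collisions. $\mathrm{Bil}_D$ carries the $C^{3+\alpha}$ topology. *)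

theory Defs
  imports "HOL-Analysis.Analysis"
begin

text \<open>The circle is S1 = R/Z and the torus is T2 = R^2/Z^2.
  A continuous map f : S1 -> T2 is represented by a lift F : R -> R^2 with
  F(t+1) - F(t) in Z^2.  A family (f_i), 1 <= i <= D, is a function on indices.\<close>

definition Zsq :: "(real \<times> real) set" where
  "Zsq = {(real_of_int a, real_of_int b) | a b. True}"

fun vd :: "nat \<Rightarrow> (real \<Rightarrow> real \<times> real) \<Rightarrow> real \<Rightarrow> real \<times> real" where
  "vd 0 F = F"
| "vd (Suc n) F = (\<lambda>t. vector_derivative (vd n F) (at t))"

definition cross2 :: "real \<times> real \<Rightarrow> real \<times> real \<Rightarrow> real" where
  "cross2 u v = fst u * snd v - snd u * fst v"

definition circle_map_lift :: "(real \<Rightarrow> real \<times> real) \<Rightarrow> bool" where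
  "circle_map_lift F \<longleftrightarrow> continuous_on UNIV F \<and> (\<forall>t. F (t + 1) - F t \<in> Zsq)"

definition C3a :: "real \<Rightarrow> (real \<Rightarrow> real \<times> real) \<Rightarrow> bool" where
  "C3a \<alpha> F \<longleftrightarrow>
     (\<forall>j<3. \<forall>t. (vd j F has_vector_derivative vd (Suc j) F t) (at t)) \<and>
     (\<exists>C. \<forall>s t. norm (vd 3 F s - vd 3 F t) \<le> C * \<bar>s - t\<bar> powr \<alpha>)"

text \<open>The lift to R^2 of the image curve f(S1) in T2.\<close>
definition lift_set :: "(real \<Rightarrow> real \<times> real) \<Rightarrow> (real \<times> real) set" where
  "lift_set F = {F t + k | t k. k \<in> Zsq}"

text \<open>Interior of the lifted scatterer bounded by f: union of the interiors of the
  convex sets whose boundaries are the connected components of the lift.\<close>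
definition scatterer_interior :: "(real \<Rightarrow> real \<times> real) \<Rightarrow> (real \<times> real) set" where
  "scatterer_interior F = (\<Union>c\<in>components (lift_set F). interior (convex hull c))"

definition Bil :: "nat \<Rightarrow> real \<Rightarrow> (nat \<Rightarrow> real \<Rightarrow> real \<times> real) set" where
  "Bil D \<alpha> = {f.
     (\<forall>i\<in>{1..D}.
        circle_map_lift (f i) \<and> C3a \<alpha> (f i) \<and>
        (\<forall>c\<in>components (lift_set (f i)). \<exists>C. convex C \<and> c = frontier C) \<and>
        (\<exists>v>0. \<forall>t. norm (vd 1 (f i) t) = v) \<and>
        (\<forall>t. vd 2 (f i) t \<noteq> 0) \<and>
        (\<forall>t. cross2 (vd 1 (f i) t) (vd 2 (f i) t) > 0) \<and>
        (\<forall>s t. f i s - f i t \<in> Zsq \<longrightarrow> s - t \<in> \<int>)) \<and>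
     (\<forall>i\<in>{1..D}. \<forall>j\<in>{1..D}. i \<noteq> j \<longrightarrow> lift_set (f i) \<inter> lift_set (f j) = {})}"

text \<open>A billiard trajectory making only grazing collisions (or none) is a full
  straight line x + t v (v nonzero) that never enters the interior of a scatterer.\<close>
definition has_grazing_only_trajectory :: "nat \<Rightarrow> (nat \<Rightarrow> real \<Rightarrow> real \<times> real) \<Rightarrow> bool" where
  "has_grazing_only_trajectory D f \<longleftrightarrow>
     (\<exists>x v. v \<noteq> 0 \<and> (\<forall>t::real. \<forall>i\<in>{1..D}. x + t *\<^sub>R v \<notin> scatterer_interior (f i)))"

definition BilFH :: "nat \<Rightarrow> real \<Rightarrow> (nat \<Rightarrow> real \<Rightarrow> real \<times> real) set" where
  "BilFH D \<alpha> = {f \<in> Bil D \<alpha>. \<not> has_grazing_only_trajectory D f}"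

definition C3a_close :: "real \<Rightarrow> real \<Rightarrow> (real \<Rightarrow> real \<times> real) \<Rightarrow> (real \<Rightarrow> real \<times> real) \<Rightarrow> bool" where
  "C3a_close \<alpha> \<epsilon> F G \<longleftrightarrow> (\<exists>k\<in>Zsq.
     let H = (\<lambda>t. F t - G t - k) in
       (\<forall>j\<le>3. \<forall>t. norm (vd j H t) \<le> \<epsilon>) \<and>
       (\<forall>s t. norm (vd 3 H s - vd 3 H t) \<le> \<epsilon> * \<bar>s - t\<bar> powr \<alpha>))"

end

theory Submission
  imports Defs
begin

(*
  Finite horizon says that every line enters the interior of the convex hull of some lattice
  translate of a scatterer boundary. Compactness of the set of lines through the unit square,
  together with Z^2-periodicity, makes this uniform: there is delta > 0 such that every line
  passes a point whose delta-ball lies inside such a hull. Now let g be a table whose boundary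
  curves are C^0-close to those of f, within delta/2 up to lattice translations (only this part
  of C^{3+alpha}-closeness is used). If a line made only grazing collisions for g, it would avoid
  the interior of the convex hull of a connected component of g's lifted boundary; that hull has
  nonempty interior because the curve has nonzero curvature, so a separating half-plane bounded
  by the line contains the nearby g-curve. The corresponding f-curve, and with it the delta-ball,
  then lies in that half-plane shifted by delta/2, which is impossible.
*)

section \<open>The lattice Z^2\<close>

lemma Zsq_iff: "k \<in> Zsq \<longleftrightarrow> fst k \<in> \<int> \<and> snd k \<in> \<int>"
  unfolding Zsq_def by (cases k) (auto elim!: Ints_cases)

lemma Zsq_add: "a \<in> Zsq \<Longrightarrow> b \<in> Zsq \<Longrightarrow> a + b \<in> Zsq"
  by (simp add: Zsq_iff)

lemma Zsq_diff: "a \<in> Zsq \<Longrightarrow> b \<in> Zsq \<Longrightarrow> a - b \<in> Zsq"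
  by (simp add: Zsq_iff)

lemma Zsq_scaleR_of_int: "a \<in> Zsq \<Longrightarrow> of_int n *\<^sub>R a \<in> Zsq"
  by (simp add: Zsq_iff)

lemma norm_diff_Zsq_ge_1:
  assumes "a \<in> Zsq" "b \<in> Zsq" "a \<noteq> b"
  shows "1 \<le> norm (a - b)"
proof -
  have "fst (a - b) \<noteq> 0 \<or> snd (a - b) \<noteq> 0"
    using assms(3) by (simp add: prod_eq_iff)
  moreover have "fst (a - b) \<in> \<int>" "snd (a - b) \<in> \<int>"
    using assms(1,2) by (simp_all add: Zsq_iff)
  moreover have "\<bar>fst (a - b)\<bar> \<le> norm (a - b)" "\<bar>snd (a - b)\<bar> \<le> norm (a - b)"
    using norm_fst_le[of "fst (a - b)" "snd (a - b)"] norm_snd_le[of "snd (a - b)" "fst (a - b)"]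
    by (simp_all only: prod.collapse real_norm_def)
  ultimately show ?thesis
    using Ints_nonzero_abs_ge1 by (meson order_trans)
qed

lemma closed_subset_Zsq:
  assumes "L \<subseteq> Zsq"
  shows "closed L"
proof (rule discrete_imp_closed[of 1])
  show "\<forall>x\<in>L. \<forall>y\<in>L. dist y x < 1 \<longrightarrow> y = x"
    using assms norm_diff_Zsq_ge_1 by (fastforce simp: dist_norm)
qed simp

lemma closed_lattice_sums:
  "L \<subseteq> Zsq \<Longrightarrow> compact K \<Longrightarrow> closed (\<Union>l\<in>L. \<Union>y\<in>K. {l + y})"
  by (intro closed_compact_sums closed_subset_Zsq)

lemma connected_component_Zsq:
  assumes "k \<in> Zsq"
  shows "connected_component_set Zsq k = {k}"
proof -
  have "id ` Zsq \<subseteq> {y. connected_component_set (id ` Zsq) y = {y}}"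
    by (rule discrete_subset_disconnected) (use norm_diff_Zsq_ge_1 in \<open>auto intro!: exI[of _ 1]\<close>)
  then show ?thesis
    using assms by auto
qed

section \<open>Lifts of circle maps and their components\<close>

lemma circle_map_lift_period:
  assumes "circle_map_lift F"
  shows "F (t + 1) - F t = F 1 - F 0"
proof -
  have "continuous_on UNIV F" and "\<And>t. F (t + 1) - F t \<in> Zsq"
    using assms by (auto simp: circle_map_lift_def)
  then have "(\<lambda>t. F (t + 1) - F t) constant_on UNIV"
    by (intro continuous_disconnected_range_constant[where T = Zsq] connected_component_Zsq)
       (auto intro!: continuous_intros continuous_on_compose2[of UNIV F])
  then obtain m where "\<And>t. F (t + 1) - F t = m"
    unfolding constant_on_def by blast
  from this[of t] this[of 0] show ?thesis by simp
qed

lemma circle_map_lift_period_Zsq: "circle_map_lift F \<Longrightarrow> F 1 - F 0 \<in> Zsq"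
  unfolding circle_map_lift_def by (metis add_0)

lemma circle_map_lift_shift:
  assumes "circle_map_lift F"
  shows "F (t + of_int n) = F t + of_int n *\<^sub>R (F 1 - F 0)"
proof -
  define m where "m = F 1 - F 0"
  have period: "F (s + 1) = F s + m" for s
    using circle_map_lift_period[OF assms, of s] unfolding m_def
    by (metis add.commute diff_add_cancel)
  show ?thesis
    unfolding m_def[symmetric]
  proof (induction n rule: int_induct[where k = 0])
    case (step1 i)
    have "F (t + of_int (i + 1)) = F ((t + of_int i) + 1)"
      by (simp add: add.assoc)
    also have "\<dots> = F t + of_int i *\<^sub>R m + m"
      using period step1 by simp
    finally show ?case
      by (simp add: scaleR_left_distrib add.assoc)
  next
    case (step2 i)
    have "F (t + of_int (i - 1)) + m = F (t + of_int i)"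
      using period[of "t + of_int (i - 1)"] by simp
    then have "F (t + of_int (i - 1)) = F t + of_int i *\<^sub>R m - m"
      using step2 by (simp add: eq_diff_eq)
    then show ?case
      by (simp add: scaleR_left_diff_distrib)
  qed simp
qed

lemma circle_map_lift_frac:
  assumes "circle_map_lift F"
  shows "F t = F (frac t) + of_int \<lfloor>t\<rfloor> *\<^sub>R (F 1 - F 0)"
  using circle_map_lift_shift[OF assms, of "frac t" "\<lfloor>t\<rfloor>"] by (simp add: frac_def)

lemma compact_circle_map_lift_arc: "circle_map_lift F \<Longrightarrow> compact (F ` {0..1})"
  unfolding circle_map_lift_def by (metis compact_Icc compact_continuous_image continuous_on_subset top_greatest)

lemma lift_set_eq_lattice_sums:
  assumes "circle_map_lift F"
  shows "lift_set F = (\<Union>l\<in>Zsq. \<Union>y\<in>F ` {0..1}. {l + y})"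
proof
  show "lift_set F \<subseteq> (\<Union>l\<in>Zsq. \<Union>y\<in>F ` {0..1}. {l + y})"
  proof
    fix w assume "w \<in> lift_set F"
    then obtain t k where w: "w = F t + k" and k: "k \<in> Zsq"
      unfolding lift_set_def by blast
    have "w = (k + of_int \<lfloor>t\<rfloor> *\<^sub>R (F 1 - F 0)) + F (frac t)"
      unfolding w by (subst circle_map_lift_frac[OF assms]) (simp add: algebra_simps)
    moreover have "k + of_int \<lfloor>t\<rfloor> *\<^sub>R (F 1 - F 0) \<in> Zsq"
      using k circle_map_lift_period_Zsq[OF assms] by (intro Zsq_add Zsq_scaleR_of_int)
    moreover have "frac t \<in> {0..1}"
      by (simp add: less_imp_le[OF frac_lt_1])
    ultimately show "w \<in> (\<Union>l\<in>Zsq. \<Union>y\<in>F ` {0..1}. {l + y})"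
      by blast
  qed
  show "(\<Union>l\<in>Zsq. \<Union>y\<in>F ` {0..1}. {l + y}) \<subseteq> lift_set F"
  proof
    fix w assume "w \<in> (\<Union>l\<in>Zsq. \<Union>y\<in>F ` {0..1}. {l + y})"
    then obtain l s where "l \<in> Zsq" "w = F s + l"
      by (auto simp: add.commute)
    then show "w \<in> lift_set F"
      unfolding lift_set_def by blast
  qed
qed

lemma curve_translate_eq_lattice_sums:
  assumes "circle_map_lift F"
  shows "range (\<lambda>t. F t + k) = (\<Union>l\<in>range (\<lambda>n. k + of_int n *\<^sub>R (F 1 - F 0)). \<Union>y\<in>F ` {0..1}. {l + y})"
proof
  show "range (\<lambda>t. F t + k) \<subseteq> (\<Union>l\<in>range (\<lambda>n. k + of_int n *\<^sub>R (F 1 - F 0)). \<Union>y\<in>F ` {0..1}. {l + y})"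
  proof (rule image_subsetI)
    fix t
    have "F t + k = (k + of_int \<lfloor>t\<rfloor> *\<^sub>R (F 1 - F 0)) + F (frac t)"
      by (subst circle_map_lift_frac[OF assms]) (simp add: algebra_simps)
    moreover have "frac t \<in> {0..1}"
      by (simp add: less_imp_le[OF frac_lt_1])
    ultimately show "F t + k \<in> (\<Union>l\<in>range (\<lambda>n. k + of_int n *\<^sub>R (F 1 - F 0)). \<Union>y\<in>F ` {0..1}. {l + y})"
      by blast
  qed
  show "(\<Union>l\<in>range (\<lambda>n. k + of_int n *\<^sub>R (F 1 - F 0)). \<Union>y\<in>F ` {0..1}. {l + y}) \<subseteq> range (\<lambda>t. F t + k)"
  proof
    fix w assume "w \<in> (\<Union>l\<in>range (\<lambda>n. k + of_int n *\<^sub>R (F 1 - F 0)). \<Union>y\<in>F ` {0..1}. {l + y})"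
    then obtain n s where "w = (k + of_int n *\<^sub>R (F 1 - F 0)) + F s"
      by blast
    also have "\<dots> = F (s + of_int n) + k"
      by (simp add: circle_map_lift_shift[OF assms] algebra_simps)
    finally show "w \<in> range (\<lambda>t. F t + k)"
      by blast
  qed
qed

lemma curve_translate_disjoint_other_lattice_sums:
  assumes F: "circle_map_lift F" and inj: "\<forall>s t. F s - F t \<in> Zsq \<longrightarrow> s - t \<in> \<int>" and k: "k \<in> Zsq"
  shows "range (\<lambda>t. F t + k) \<inter>
    (\<Union>l\<in>Zsq - range (\<lambda>n. k + of_int n *\<^sub>R (F 1 - F 0)). \<Union>y\<in>F ` {0..1}. {l + y}) = {}"
proof (rule ccontr)
  assume "\<not> ?thesis"
  then obtain s s' l where l: "l \<in> Zsq" "l \<notin> range (\<lambda>n. k + of_int n *\<^sub>R (F 1 - F 0))"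
    and eq: "F s + k = l + F s'"
    by blast
  have "F s - F s' = l - k"
    using eq by (simp add: algebra_simps)
  then have "s - s' \<in> \<int>"
    using inj Zsq_diff[OF l(1) k] by metis
  then obtain j where "s = s' + of_int j"
    by (metis Ints_cases add_diff_cancel_left' diff_add_cancel)
  then have "l = k + of_int j *\<^sub>R (F 1 - F 0)"
    using eq circle_map_lift_shift[OF F, of s' j] by (simp add: algebra_simps)
  then show False
    using l(2) by blast
qed

lemma component_lift_set_subset_translate:
  assumes F: "circle_map_lift F" and inj: "\<forall>s t. F s - F t \<in> Zsq \<longrightarrow> s - t \<in> \<int>"
    and c: "c \<in> components (lift_set F)"
  obtains k where "k \<in> Zsq" "c \<subseteq> range (\<lambda>t. F t + k)"
proof -
  have c_sub: "c \<subseteq> lift_set F"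
    using c in_components_subset by blast
  obtain z where "z \<in> c"
    using c in_components_nonempty by blast
  then have "z \<in> lift_set F"
    using c_sub by blast
  then obtain s k where z: "z = F s + k" and k: "k \<in> Zsq"
    unfolding lift_set_def by blast
  \<comment> \<open>A is one translate of the curve, B the union of all others; both are lattice translates of
    the compact arc F[0,1], hence closed, and they are disjoint by injectivity.\<close>
  define L where "L = range (\<lambda>n. k + of_int n *\<^sub>R (F 1 - F 0))"
  define A where "A = range (\<lambda>t. F t + k)"
  define B where "B = (\<Union>l\<in>Zsq - L. \<Union>y\<in>F ` {0..1}. {l + y})"
  have "L \<subseteq> Zsq"
    unfolding L_def using k circle_map_lift_period_Zsq[OF F] by (auto intro!: Zsq_add Zsq_scaleR_of_int)
  have A_sums: "A = (\<Union>l\<in>L. \<Union>y\<in>F ` {0..1}. {l + y})"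
    unfolding A_def L_def by (rule curve_translate_eq_lattice_sums[OF F])
  have "closed A"
    unfolding A_sums by (rule closed_lattice_sums[OF \<open>L \<subseteq> Zsq\<close> compact_circle_map_lift_arc[OF F]])
  moreover have "closed B"
    unfolding B_def by (rule closed_lattice_sums[OF _ compact_circle_map_lift_arc[OF F]]) blast
  moreover have "lift_set F \<subseteq> A \<union> B"
    unfolding lift_set_eq_lattice_sums[OF F] A_sums B_def using \<open>L \<subseteq> Zsq\<close> by blast
  moreover have "A \<inter> B = {}"
    unfolding A_def B_def L_def by (rule curve_translate_disjoint_other_lattice_sums[OF F inj k])
  ultimately have "A \<inter> c = {} \<or> B \<inter> c = {}"
    using c_sub by (intro connected_closedD[OF in_components_connected[OF c]]) auto
  moreover have "z \<in> A"
    unfolding A_def z by blast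
  ultimately have "c \<subseteq> A"
    using \<open>z \<in> c\<close> \<open>lift_set F \<subseteq> A \<union> B\<close> c_sub by blast
  then show thesis
    using that k unfolding A_def by blast
qed

section \<open>Curvature and separation by lines\<close>

lemma cross2_eq_0_if_orthogonal:
  assumes "a \<noteq> 0" "a \<bullet> u = 0" "a \<bullet> w = 0"
  shows "cross2 u w = 0"
proof -
  have "fst a * cross2 u w = snd w * (a \<bullet> u) - snd u * (a \<bullet> w)"
    and "snd a * cross2 u w = fst u * (a \<bullet> w) - fst w * (a \<bullet> u)"
    by (simp_all add: cross2_def inner_prod_def algebra_simps)
  then show ?thesis
    using assms by (auto simp: prod_eq_iff)
qed

lemma interior_convex_hull_curve_nonempty:
  assumes G': "\<And>t. (G has_vector_derivative G' t) (at t)"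
    and G'': "\<And>t. (G' has_vector_derivative G'' t) (at t)"
    and curved: "cross2 (G' t0) (G'' t0) \<noteq> 0"
  shows "interior (convex hull (range G)) \<noteq> {}"
proof
  assume "interior (convex hull (range G)) = {}"
  then obtain a b where a: "a \<noteq> 0" and "convex hull (range G) \<subseteq> {x. a \<bullet> x = b}"
    using empty_interior_subset_hyperplane[OF convex_convex_hull] by metis
  then have "(\<lambda>t. a \<bullet> G t) = (\<lambda>t. b)"
    using hull_subset[of "range G"] by fastforce
  then have "((\<lambda>t. b) has_vector_derivative a \<bullet> G' t) (at t)" for t
    using bounded_linear.has_vector_derivative[OF bounded_linear_inner_right G'] by metis
  then have a_G': "a \<bullet> G' t = 0" for t
    using vector_derivative_unique_at has_vector_derivative_const by blast
  then have "(\<lambda>t. a \<bullet> G' t) = (\<lambda>t. 0)"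
    by simp
  then have "((\<lambda>t. 0) has_vector_derivative a \<bullet> G'' t) (at t)" for t
    using bounded_linear.has_vector_derivative[OF bounded_linear_inner_right G''] by metis
  then have "a \<bullet> G'' t = 0" for t
    using vector_derivative_unique_at has_vector_derivative_const by blast
  then show False
    using curved cross2_eq_0_if_orthogonal[OF a a_G'] by blast
qed

lemma convex_line: "convex (range (\<lambda>t::real. x + t *\<^sub>R v))"
  unfolding convex_alt
proof clarsimp
  fix s t u :: real
  have "(1 - u) *\<^sub>R (x + s *\<^sub>R v) + u *\<^sub>R (x + t *\<^sub>R v) = x + ((1 - u) * s + u * t) *\<^sub>R v"
    by (simp add: algebra_simps)
  then show "(1 - u) *\<^sub>R (x + s *\<^sub>R v) + u *\<^sub>R (x + t *\<^sub>R v) \<in> range (\<lambda>t. x + t *\<^sub>R v)"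
    by (metis rangeI)
qed

lemma line_avoiding_interior_separates:
  fixes S :: "'a::euclidean_space set"
  assumes "convex S" "interior S \<noteq> {}" and avoid: "\<And>t. x + t *\<^sub>R v \<notin> interior S"
  shows "\<exists>n. n \<noteq> 0 \<and> n \<bullet> v = 0 \<and> (\<forall>z\<in>S. n \<bullet> x \<le> n \<bullet> z)"
proof -
  obtain n b where n: "n \<noteq> 0" and line: "\<forall>t. n \<bullet> (x + t *\<^sub>R v) \<le> b"
    and int: "\<forall>z\<in>interior S. b \<le> n \<bullet> z"
    using separating_hyperplane_sets[OF convex_line convex_interior[OF assms(1)] _ assms(2)] avoid
    by blast
  have "n \<bullet> v = 0"
  proof (rule ccontr)
    assume "n \<bullet> v \<noteq> 0"
    then have "n \<bullet> (x + ((b - n \<bullet> x + 1) / (n \<bullet> v)) *\<^sub>R v) = b + 1"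
      by (simp add: inner_add_right)
    then show False
      using line by (metis add_le_same_cancel1 not_one_le_zero)
  qed
  then have "interior S \<subseteq> {z. n \<bullet> x \<le> n \<bullet> z}"
    using line int by (fastforce simp: inner_add_right)
  then have "closure (interior S) \<subseteq> {z. n \<bullet> x \<le> n \<bullet> z}"
    by (intro closure_minimal closed_halfspace_ge)
  then have "S \<subseteq> {z. n \<bullet> x \<le> n \<bullet> z}"
    using convex_closure_interior[OF assms(1,2)] closure_subset by blast
  then show ?thesis
    using n \<open>n \<bullet> v = 0\<close> by blast
qed

lemma ball_subset_halfspace_radius_le:
  fixes y n :: "'a::real_inner"
  assumes "n \<noteq> 0" "0 \<le> e" and ball: "ball y r \<subseteq> {z. n \<bullet> y - norm n * e \<le> n \<bullet> z}"
  shows "r \<le> e"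
proof (rule ccontr)
  assume "\<not> r \<le> e"
  define s where "s = (e + r) / 2"
  have "norm (s *\<^sub>R (n /\<^sub>R norm n)) = s"
    using assms(1,2) \<open>\<not> r \<le> e\<close> by (simp add: s_def)
  then have "y - s *\<^sub>R (n /\<^sub>R norm n) \<in> ball y r"
    using \<open>\<not> r \<le> e\<close> by (simp add: s_def dist_norm)
  then have "n \<bullet> y - norm n * e \<le> n \<bullet> (y - s *\<^sub>R (n /\<^sub>R norm n))"
    using ball by blast
  also have "\<dots> = n \<bullet> y - s * norm n"
    using assms(1) by (simp add: inner_diff_right dot_square_norm power2_eq_square)
  finally have "n \<bullet> y - norm n * e \<le> n \<bullet> y - s * norm n" .
  then show False
    using assms(1) \<open>\<not> r \<le> e\<close> by (simp add: s_def field_simps)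
qed

section \<open>Uniform depth\<close>

lemma uniform_depth_compact:
  fixes K :: "('a::real_normed_vector \<times> 'a) set"
  assumes "compact K" and opn: "\<And>U. U \<in> \<U> \<Longrightarrow> open U"
    and hit: "\<And>q. q \<in> K \<Longrightarrow> \<exists>t. fst q + t *\<^sub>R snd q \<in> \<Union>\<U>"
  obtains \<delta> where "\<delta> > 0" "\<And>q. q \<in> K \<Longrightarrow> \<exists>t. \<exists>U\<in>\<U>. ball (fst q + t *\<^sub>R snd q) \<delta> \<subseteq> U"
proof -
  define \<G> where "\<G> = {(\<lambda>q. fst q + t *\<^sub>R snd q) -` U | t U. U \<in> \<U>}"
  have "K \<subseteq> \<Union>\<G>"
    using hit unfolding \<G>_def by blast
  moreover have "open G" if "G \<in> \<G>" for G
    using that opn unfolding \<G>_def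
    by (auto intro!: continuous_open_vimage continuous_intros)
  ultimately obtain \<delta> where "\<delta> > 0" and \<delta>: "\<And>q. q \<in> K \<Longrightarrow> \<exists>G\<in>\<G>. ball q \<delta> \<subseteq> G"
    using Heine_Borel_lemma[OF \<open>compact K\<close>] by metis
  have "\<exists>t. \<exists>U\<in>\<U>. ball (fst q + t *\<^sub>R snd q) \<delta> \<subseteq> U" if q: "q \<in> K" for q
  proof -
    obtain t U where "U \<in> \<U>" and sub: "ball q \<delta> \<subseteq> (\<lambda>q. fst q + t *\<^sub>R snd q) -` U"
      using \<delta>[OF q] unfolding \<G>_def by blast
    have "z \<in> U" if "z \<in> ball (fst q + t *\<^sub>R snd q) \<delta>" for z
    proof -
      have "dist q (z - t *\<^sub>R snd q, snd q) = dist (fst q + t *\<^sub>R snd q) z"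
        by (cases q) (simp add: dist_Pair_Pair dist_norm algebra_simps)
      then have "(z - t *\<^sub>R snd q, snd q) \<in> ball q \<delta>"
        using that by simp
      then show "z \<in> U"
        using sub by auto
    qed
    then show ?thesis
      using \<open>U \<in> \<U>\<close> by blast
  qed
  then show thesis
    using that \<open>\<delta> > 0\<close> by blast
qed

lemma uniform_depth_periodic:
  assumes opn: "\<And>U. U \<in> \<U> \<Longrightarrow> open U"
    and periodic: "\<And>U k. U \<in> \<U> \<Longrightarrow> k \<in> Zsq \<Longrightarrow> (+) k ` U \<in> \<U>"
    and hit: "\<And>x v. v \<noteq> 0 \<Longrightarrow> \<exists>t. x + t *\<^sub>R v \<in> \<Union>\<U>"
  obtains \<delta> where "\<delta> > 0" "\<And>x v. v \<noteq> 0 \<Longrightarrow> \<exists>t. \<exists>U\<in>\<U>. ball (x + t *\<^sub>R v) \<delta> \<subseteq> U"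
proof -
  define K :: "((real \<times> real) \<times> (real \<times> real)) set"
    where "K = ({0..1} \<times> {0..1}) \<times> sphere 0 1"
  have "compact K"
    unfolding K_def by (intro compact_Times compact_Icc compact_sphere)
  moreover have "\<exists>t. fst q + t *\<^sub>R snd q \<in> \<Union>\<U>" if "q \<in> K" for q
  proof -
    have "snd q \<noteq> 0"
      using that unfolding K_def by auto
    then show ?thesis
      using hit by blast
  qed
  ultimately obtain \<delta> where "\<delta> > 0"
    and \<delta>: "\<And>q. q \<in> K \<Longrightarrow> \<exists>t. \<exists>U\<in>\<U>. ball (fst q + t *\<^sub>R snd q) \<delta> \<subseteq> U"
    using uniform_depth_compact[OF _ opn] by metis
  have "\<exists>t. \<exists>U\<in>\<U>. ball (x + t *\<^sub>R v) \<delta> \<subseteq> U" if "v \<noteq> 0" for x v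
  proof -
    define k :: "real \<times> real" where "k = (of_int \<lfloor>fst x\<rfloor>, of_int \<lfloor>snd x\<rfloor>)"
    have "k \<in> Zsq"
      by (simp add: k_def Zsq_iff)
    have "(x - k, v /\<^sub>R norm v) \<in> K"
      using that unfolding K_def k_def
      by (cases x) (simp add: frac_def[symmetric] less_imp_le[OF frac_lt_1])
    then obtain t U where "U \<in> \<U>" and sub: "ball (x - k + t *\<^sub>R (v /\<^sub>R norm v)) \<delta> \<subseteq> U"
      using \<delta> by fastforce
    have "x + (t / norm v) *\<^sub>R v = k + (x - k + t *\<^sub>R (v /\<^sub>R norm v))"
      by (simp add: divide_inverse)
    then have "ball (x + (t / norm v) *\<^sub>R v) \<delta> = (+) k ` ball (x - k + t *\<^sub>R (v /\<^sub>R norm v)) \<delta>"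
      by (simp only: ball_translation)
    also have "\<dots> \<subseteq> (+) k ` U"
      using sub by blast
    finally show ?thesis
      using periodic[OF \<open>U \<in> \<U>\<close> \<open>k \<in> Zsq\<close>] by blast
  qed
  then show thesis
    using that \<open>\<delta> > 0\<close> by blast
qed

section \<open>Billiard tables\<close>

lemma Bil_D:
  assumes "f \<in> Bil D \<alpha>" "i \<in> {1..D}"
  shows "circle_map_lift (f i)" "C3a \<alpha> (f i)" "0 < cross2 (vd 1 (f i) t) (vd 2 (f i) t)"
    and "\<forall>s t. f i s - f i t \<in> Zsq \<longrightarrow> s - t \<in> \<int>"
  using assms by (simp_all add: Bil_def)

lemma C3a_has_vector_derivative:
  assumes "C3a \<alpha> F"
  shows "(F has_vector_derivative vd 1 F t) (at t)" "(vd 1 F has_vector_derivative vd 2 F t) (at t)"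
proof -
  have d: "(vd j F has_vector_derivative vd (Suc j) F t) (at t)" if "j < 3" for j
    using assms that by (simp add: C3a_def)
  have "(vd 0 F has_vector_derivative vd (Suc 0) F t) (at t)"
    by (rule d) simp
  then show "(F has_vector_derivative vd 1 F t) (at t)"
    by (simp only: vd.simps(1) One_nat_def)
  have "(vd 1 F has_vector_derivative vd (Suc 1) F t) (at t)"
    by (rule d) simp
  then show "(vd 1 F has_vector_derivative vd 2 F t) (at t)"
    by (simp only: Suc_1)
qed

lemma C3a_close_imp_uniformly_close:
  assumes "C3a_close \<alpha> \<epsilon> F G"
  obtains \<kappa> where "\<kappa> \<in> Zsq" "\<And>t. norm (F t - G t - \<kappa>) \<le> \<epsilon>"
proof -
  obtain \<kappa> where "\<kappa> \<in> Zsq" and "\<forall>t. norm (vd 0 (\<lambda>t. F t - G t - \<kappa>) t) \<le> \<epsilon>"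
    using assms unfolding C3a_close_def Let_def by blast
  then show thesis
    using that by simp
qed

lemma scatterer_interior_subset_translates:
  assumes "circle_map_lift F" "\<forall>s t. F s - F t \<in> Zsq \<longrightarrow> s - t \<in> \<int>"
  shows "scatterer_interior F \<subseteq> (\<Union>k\<in>Zsq. interior (convex hull range (\<lambda>t. F t + k)))"
proof
  fix z assume "z \<in> scatterer_interior F"
  then obtain c where c: "c \<in> components (lift_set F)" and z: "z \<in> interior (convex hull c)"
    unfolding scatterer_interior_def by blast
  obtain k where "k \<in> Zsq" "c \<subseteq> range (\<lambda>t. F t + k)"
    using component_lift_set_subset_translate[OF assms c] by blast
  moreover from this(2) have "interior (convex hull c) \<subseteq> interior (convex hull range (\<lambda>t. F t + k))"
    by (intro interior_mono hull_mono)
  ultimately show "z \<in> (\<Union>k\<in>Zsq. interior (convex hull range (\<lambda>t. F t + k)))"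
    using z by blast
qed

lemma translation_interior_convex_hull_curve:
  fixes F :: "real \<Rightarrow> 'a::real_normed_vector"
  shows "(+) a ` interior (convex hull range (\<lambda>t. F t + k)) = interior (convex hull range (\<lambda>t. F t + (a + k)))"
proof -
  have "range (\<lambda>t. F t + (a + k)) = (+) a ` range (\<lambda>t. F t + k)"
    by (auto simp: image_image add_ac)
  then show ?thesis
    using convex_hull_translation[of a] interior_translation[of a] by simp
qed

lemma grazing_line_separates_translate:
  assumes G: "circle_map_lift G" "C3a \<alpha> G" and curved: "cross2 (vd 1 G t0) (vd 2 G t0) \<noteq> 0"
    and avoid: "\<And>t. x + t *\<^sub>R v \<notin> scatterer_interior G" and w: "w \<in> Zsq"
  shows "\<exists>n. n \<noteq> 0 \<and> n \<bullet> v = 0 \<and> (\<forall>t. n \<bullet> x \<le> n \<bullet> (G t + w))"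
proof -
  define W where "W = range (\<lambda>t. G t + w)"
  define c where "c = connected_component_set (lift_set G) (G 0 + w)"
  have "W \<subseteq> lift_set G"
    using w unfolding W_def lift_set_def by blast
  moreover have "connected W"
    using G(1) unfolding W_def circle_map_lift_def
    by (intro connected_continuous_image connected_UNIV) (auto intro!: continuous_intros)
  ultimately have "W \<subseteq> c"
    unfolding c_def by (intro connected_component_maximal) (auto simp: W_def)
  have "c \<in> components (lift_set G)"
    unfolding c_def using \<open>W \<subseteq> lift_set G\<close> by (intro componentsI) (auto simp: W_def)
  then have avoid_c: "x + t *\<^sub>R v \<notin> interior (convex hull c)" for t
    using avoid unfolding scatterer_interior_def by blast
  have "interior (convex hull W) \<noteq> {}"
    unfolding W_def using C3a_has_vector_derivative[OF G(2)]
    by (intro interior_convex_hull_curve_nonempty[where G' = "vd 1 G" and G'' = "vd 2 G", OF _ _ curved])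
       (simp_all add: has_vector_derivative_add_const)
  then have "interior (convex hull c) \<noteq> {}"
    using interior_mono[OF hull_mono[OF \<open>W \<subseteq> c\<close>]] by blast
  then obtain n where "n \<noteq> 0" "n \<bullet> v = 0" "\<forall>z\<in>convex hull c. n \<bullet> x \<le> n \<bullet> z"
    using line_avoiding_interior_separates[OF convex_convex_hull _ avoid_c] by blast
  moreover have "G t + w \<in> convex hull c" for t
    using \<open>W \<subseteq> c\<close> hull_subset[of c convex] unfolding W_def by blast
  ultimately show ?thesis
    by blast
qed

lemma line_meets_scatterer_of_close_curve:
  assumes G: "circle_map_lift G" "C3a \<alpha> G" "cross2 (vd 1 G t1) (vd 2 G t1) \<noteq> 0"
    and deep: "ball (x + t0 *\<^sub>R v) \<delta> \<subseteq> interior (convex hull range F)"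
    and close: "\<And>t. norm (F t - (G t + w)) \<le> e" and w: "w \<in> Zsq" and "0 \<le> e" "e < \<delta>"
  shows "\<exists>t. x + t *\<^sub>R v \<in> scatterer_interior G"
proof (rule ccontr)
  assume "\<nexists>t. x + t *\<^sub>R v \<in> scatterer_interior G"
  then have avoid: "\<And>t. x + t *\<^sub>R v \<notin> scatterer_interior G"
    by blast
  obtain n where n: "n \<noteq> 0" "n \<bullet> v = 0" and side: "\<And>t. n \<bullet> x \<le> n \<bullet> (G t + w)"
    using grazing_line_separates_translate[OF G avoid w] by blast
  define H where "H = {z. n \<bullet> (x + t0 *\<^sub>R v) - norm n * e \<le> n \<bullet> z}"
  have "F t \<in> H" for t
  proof -
    have "\<bar>n \<bullet> (F t - (G t + w))\<bar> \<le> norm n * e"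
      using Cauchy_Schwarz_ineq2[of n] mult_left_mono[OF close norm_ge_zero] by (metis order_trans)
    then show ?thesis
      using side[of t] n(2) unfolding H_def by (auto simp: inner_add_right inner_diff_right)
  qed
  then have "convex hull range F \<subseteq> H"
    unfolding H_def by (intro hull_minimal convex_halfspace_ge) auto
  then have "ball (x + t0 *\<^sub>R v) \<delta> \<subseteq> H"
    using deep interior_subset by blast
  then have "\<delta> \<le> e"
    unfolding H_def by (rule ball_subset_halfspace_radius_le[OF n(1) \<open>0 \<le> e\<close>])
  then show False
    using \<open>e < \<delta>\<close> by simp
qed

lemma finite_horizon_line_meets_hull_translate:
  assumes "f \<in> BilFH D \<alpha>" "v \<noteq> 0"
  obtains t i k where "i \<in> {1..D}" "k \<in> Zsq"
    "x + t *\<^sub>R v \<in> interior (convex hull range (\<lambda>s. f i s + k))"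
proof -
  have f: "f \<in> Bil D \<alpha>" and "\<not> has_grazing_only_trajectory D f"
    using assms(1) by (simp_all add: BilFH_def)
  then obtain t i where i: "i \<in> {1..D}" and "x + t *\<^sub>R v \<in> scatterer_interior (f i)"
    using assms(2) unfolding has_grazing_only_trajectory_def by blast
  then show thesis
    using scatterer_interior_subset_translates[OF Bil_D(1,4)[OF f i]] that by blast
qed

lemma finite_horizon_uniform_depth:
  assumes "f \<in> BilFH D \<alpha>"
  obtains \<delta> where "\<delta> > 0" "\<And>x v. v \<noteq> 0 \<Longrightarrow> \<exists>t. \<exists>i\<in>{1..D}. \<exists>k\<in>Zsq.
    ball (x + t *\<^sub>R v) \<delta> \<subseteq> interior (convex hull range (\<lambda>s. f i s + k))"
proof -
  define \<U> where "\<U> = {interior (convex hull range (\<lambda>s. f i s + k)) | i k. i \<in> {1..D} \<and> k \<in> Zsq}"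
  have "\<exists>t. x + t *\<^sub>R v \<in> \<Union>\<U>" if v: "v \<noteq> 0" for x v
  proof -
    obtain t i k where "i \<in> {1..D}" "k \<in> Zsq"
      and "x + t *\<^sub>R v \<in> interior (convex hull range (\<lambda>s. f i s + k))"
      using finite_horizon_line_meets_hull_translate[OF assms v] .
    then show ?thesis
      unfolding \<U>_def by blast
  qed
  moreover have "(+) k ` U \<in> \<U>" if U: "U \<in> \<U>" and k: "k \<in> Zsq" for U k
  proof -
    obtain i k' where "i \<in> {1..D}" "k' \<in> Zsq" and U: "U = interior (convex hull range (\<lambda>s. f i s + k'))"
      using U unfolding \<U>_def by blast
    moreover have "(+) k ` U = interior (convex hull range (\<lambda>s. f i s + (k + k')))"
      unfolding U by (rule translation_interior_convex_hull_curve)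
    ultimately show ?thesis
      unfolding \<U>_def using Zsq_add[OF k] by blast
  qed
  moreover have "open U" if "U \<in> \<U>" for U
    using that unfolding \<U>_def by auto
  ultimately obtain \<delta> where "\<delta> > 0"
    and deep: "\<And>x v. v \<noteq> 0 \<Longrightarrow> \<exists>t. \<exists>U\<in>\<U>. ball (x + t *\<^sub>R v) \<delta> \<subseteq> U"
    using uniform_depth_periodic[of \<U>] by metis
  have "\<exists>t. \<exists>i\<in>{1..D}. \<exists>k\<in>Zsq. ball (x + t *\<^sub>R v) \<delta> \<subseteq> interior (convex hull range (\<lambda>s. f i s + k))"
    if v: "v \<noteq> 0" for x v
  proof -
    obtain t U where "U \<in> \<U>" "ball (x + t *\<^sub>R v) \<delta> \<subseteq> U"
      using deep[OF v] by blast
    then show ?thesis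
      unfolding \<U>_def by blast
  qed
  with \<open>\<delta> > 0\<close> show thesis
    using that by blast
qed

lemma line_meets_scatterer_of_C3a_close:
  assumes g: "g \<in> Bil D \<alpha>" "i \<in> {1..D}" and close: "C3a_close \<alpha> e F (g i)" and "0 \<le> e" "e < \<delta>"
    and k: "k \<in> Zsq" and deep: "ball (x + t0 *\<^sub>R v) \<delta> \<subseteq> interior (convex hull range (\<lambda>s. F s + k))"
  shows "\<exists>t. x + t *\<^sub>R v \<in> scatterer_interior (g i)"
proof -
  obtain \<kappa> where \<kappa>: "\<kappa> \<in> Zsq" and near: "\<And>t. norm (F t - g i t - \<kappa>) \<le> e"
    using C3a_close_imp_uniformly_close[OF close] by blast
  have near': "\<And>t. norm ((F t + k) - (g i t + (\<kappa> + k))) \<le> e"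
    using near by (simp add: algebra_simps)
  have curved: "cross2 (vd 1 (g i) 0) (vd 2 (g i) 0) \<noteq> 0"
    using Bil_D(3)[OF g] by (metis less_irrefl)
  show ?thesis
    by (rule line_meets_scatterer_of_close_curve[OF Bil_D(1,2)[OF g] curved deep near'
          Zsq_add[OF \<kappa> k] \<open>0 \<le> e\<close> \<open>e < \<delta>\<close>])
qed

theorem proposition4p2:
  fixes D :: nat and \<alpha> :: real
  assumes "D \<ge> 1" and "0 < \<alpha>" and "\<alpha> < 1"
  shows "\<forall>f\<in>BilFH D \<alpha>. \<exists>\<epsilon>>0. \<forall>g\<in>Bil D \<alpha>.
           (\<forall>i\<in>{1..D}. C3a_close \<alpha> \<epsilon> (f i) (g i)) \<longrightarrow> g \<in> BilFH D \<alpha>"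
proof
  fix f assume "f \<in> BilFH D \<alpha>"
  then obtain \<delta> where "\<delta> > 0" and deep: "\<And>x v. v \<noteq> 0 \<Longrightarrow> \<exists>t. \<exists>i\<in>{1..D}. \<exists>k\<in>Zsq.
      ball (x + t *\<^sub>R v) \<delta> \<subseteq> interior (convex hull range (\<lambda>s. f i s + k))"
    using finite_horizon_uniform_depth by blast
  show "\<exists>\<epsilon>>0. \<forall>g\<in>Bil D \<alpha>. (\<forall>i\<in>{1..D}. C3a_close \<alpha> \<epsilon> (f i) (g i)) \<longrightarrow> g \<in> BilFH D \<alpha>"
  proof (intro exI[of _ "\<delta> / 2"] conjI ballI impI)
    fix g assume g: "g \<in> Bil D \<alpha>" and close: "\<forall>i\<in>{1..D}. C3a_close \<alpha> (\<delta> / 2) (f i) (g i)"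
    have "\<exists>t. \<exists>i\<in>{1..D}. x + t *\<^sub>R v \<in> scatterer_interior (g i)" if v: "v \<noteq> 0" for x v
    proof -
      obtain t0 i k where "i \<in> {1..D}" "k \<in> Zsq"
        and "ball (x + t0 *\<^sub>R v) \<delta> \<subseteq> interior (convex hull range (\<lambda>s. f i s + k))"
        using deep[OF v] by blast
      moreover have "0 \<le> \<delta> / 2" "\<delta> / 2 < \<delta>"
        using \<open>\<delta> > 0\<close> by simp_all
      ultimately show ?thesis
        using line_meets_scatterer_of_C3a_close[OF g] close by blast
    qed
    then show "g \<in> BilFH D \<alpha>"
      using g unfolding BilFH_def has_grazing_only_trajectory_def by blast
  qed (use \<open>\<delta> > 0\<close> in simp)
qed

end
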